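(* Let $\mathbb{M}_1=(X,\mathcal{I}_1)$, $\mathbb{M}_2=(X,\mathcal{I}_2)$ be matroids on a finite set $X$, let $B$ be a common basis, let $\delta\ge0$, and let $A_1,A_2$ be the arc sets of the exchange graph of $B$ (see context). For a weight function $w':X\to\mathbb{R}_{\ge0}$, define arc lengths $l_{xy}=w'(x)$ for $(x,y)\in A_1$ and $l_{yx}=-w'(y)$ for $(y,x)\in A_2$. Then $B$ is $\delta$-optimal under $w'$ (i.e. $w'(B)\ge w'(B')+\delta$ for every common basis $B'\ne B$) if and only if there exist real numbers $d_{xy}$, $x,y\in X$, such that $d_{xy}\le l_{xy}$ for all $(x,y)\in A_1\cup A_2$, $d_{xz}\le d_{xy}+l_{yz}$ for all $x,z\in X$ and all $(y,z)\in A_1\cup A_2$, and $d_{xx}\ge\delta$ for all $x\in X$. Consequently, the problem of finding $w'$ minimizing $\sum_{e\in X}(w'(e)-w(e))^2$ such that $B$ is $\delta$-optimal under $w'$ is equivalent to a quadratic program with linear constraints in the variables $w'$, $l$, $d$.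
   Context: $w'(S)=\sum_{x\in S}w'(x)$. The exchange graph of $B$ has vertex set $X$ and arcs $A_1=\{(x,y): x\in B,\ y\in X\setminus B,\ B-\{x\}+\{y\}\in\mathcal{I}_1\}$ and $A_2=\{(y,x): x\in B,\ y\in X\setminus B,\ B-\{x\}+\{y\}\in\mathcal{I}_2\}$. *)

theory Defs
  imports Complex_Main
begin

definition matroid :: "'a set \<Rightarrow> 'a set set \<Rightarrow> bool" where
  "matroid X I \<longleftrightarrow>
     finite X \<and> (\<forall>A\<in>I. A \<subseteq> X) \<and> {} \<in> I \<and>
     (\<forall>A B. B \<in> I \<and> A \<subseteq> B \<longrightarrow> A \<in> I) \<and>
     (\<forall>A B. A \<in> I \<and> B \<in> I \<and> card A < card B \<longrightarrow> (\<exists>e\<in>B - A. insert e A \<in> I))"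

definition basis :: "'a set set \<Rightarrow> 'a set \<Rightarrow> bool" where
  "basis I B \<longleftrightarrow> B \<in> I \<and> (\<forall>C\<in>I. B \<subseteq> C \<longrightarrow> C = B)"

definition common_basis :: "'a set set \<Rightarrow> 'a set set \<Rightarrow> 'a set \<Rightarrow> bool" where
  "common_basis I1 I2 B \<longleftrightarrow> basis I1 B \<and> basis I2 B"

definition exch_A1 :: "'a set \<Rightarrow> 'a set set \<Rightarrow> 'a set \<Rightarrow> ('a \<times> 'a) set" where
  "exch_A1 X I1 B = {(x, y). x \<in> B \<and> y \<in> X - B \<and> insert y (B - {x}) \<in> I1}"

definition exch_A2 :: "'a set \<Rightarrow> 'a set set \<Rightarrow> 'a set \<Rightarrow> ('a \<times> 'a) set" where
  "exch_A2 X I2 B = {(y, x). x \<in> B \<and> y \<in> X - B \<and> insert y (B - {x}) \<in> I2}"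

definition arc_len :: "'a set \<Rightarrow> 'a set set \<Rightarrow> 'a set set \<Rightarrow> 'a set \<Rightarrow> ('a \<Rightarrow> real) \<Rightarrow> 'a \<Rightarrow> 'a \<Rightarrow> real" where
  "arc_len X I1 I2 B w u v =
     (if (u, v) \<in> exch_A1 X I1 B then w u
      else if (u, v) \<in> exch_A2 X I2 B then - w u else 0)"

definition delta_optimal :: "'a set set \<Rightarrow> 'a set set \<Rightarrow> ('a \<Rightarrow> real) \<Rightarrow> real \<Rightarrow> 'a set \<Rightarrow> bool" where
  "delta_optimal I1 I2 w \<delta> B \<longleftrightarrow>
     (\<forall>B'. common_basis I1 I2 B' \<and> B' \<noteq> B \<longrightarrow> sum w B \<ge> sum w B' + \<delta>)"

end

theory Submission
  imports Defs "HOL-Library.FuncSet"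
begin

text \<open>
  If distances \<open>d\<close> exist, fix a common basis \<open>B' \<noteq> B\<close> and \<open>x0 \<in> B - B'\<close>. Exchange bijections
  between \<open>B' - B\<close> and \<open>B - B'\<close> in both matroids give, for each \<open>y \<in> B' - B\<close>, a path
  \<open>f1 y \<rightarrow> y \<rightarrow> f2 y\<close> in the exchange graph; summing the triangle inequalities of \<open>d x0\<close> along
  these paths telescopes to \<open>\<delta> \<le> d x0 x0 \<le> w'(B) - w'(B')\<close>.

  Conversely, let \<open>B\<close> be \<open>\<delta>\<close>-optimal. A closed walk in the exchange graph alternates between \<open>B\<close>
  and its complement, so it is an alternating cycle. Suppose some alternating cycle is shorter
  than \<open>\<delta>\<close> and take one with fewest vertices. Every chord shortcut of it is a smaller
  alternating cycle, hence of length at least \<open>\<delta>\<close>; this makes the (slightly tilted) prefix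
  lengths a potential decreasing along all chords, so by the unique-matching lemma exchanging
  along the cycle gives a common basis of weight more than \<open>w'(B) - \<delta>\<close>. Hence all closed walks
  have length at least \<open>\<delta> \<ge> 0\<close>, and shortest-walk distances, made finite by a virtual
  source, are the required \<open>d\<close>.
\<close>

section \<open>Exchange in matroids\<close>

locale finite_matroid =
  fixes X :: "'a set" and F :: "'a set set"
  assumes matroid: "matroid X F"
begin

lemma finite_ground: "finite X"
  using matroid unfolding matroid_def by auto

lemma indep_subset_ground: "A \<in> F \<Longrightarrow> A \<subseteq> X"
  using matroid unfolding matroid_def by auto

lemma indep_finite: "A \<in> F \<Longrightarrow> finite A"
  using indep_subset_ground finite_ground finite_subset by blast

lemma indep_subset: "B \<in> F \<Longrightarrow> A \<subseteq> B \<Longrightarrow> A \<in> F"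
  using matroid unfolding matroid_def by blast

lemma indep_augment: "A \<in> F \<Longrightarrow> B \<in> F \<Longrightarrow> card A < card B \<Longrightarrow> \<exists>e\<in>B - A. insert e A \<in> F"
  using matroid unfolding matroid_def by blast

lemma indep_augment_to_card:
  assumes "T \<in> F" "S \<in> F" "card T \<le> card S"
  shows "\<exists>T'. T \<subseteq> T' \<and> T' \<subseteq> T \<union> S \<and> card T' = card S \<and> T' \<in> F"
  using assms
proof (induction "card S - card T" arbitrary: T)
  case 0
  then show ?case by (intro exI[of _ T]) auto
next
  case (Suc n)
  then obtain e where e: "e \<in> S - T" "insert e T \<in> F"
    using indep_augment by (metis Suc_neq_Zero diff_is_0_eq linorder_not_le)
  have card_eT: "card (insert e T) = Suc (card T)"
    using e indep_finite[OF Suc.prems(1)] by simp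
  with Suc.hyps(2) have "n = card S - card (insert e T)" "card (insert e T) \<le> card S" by linarith+
  from Suc.hyps(1)[OF this(1) e(2) Suc.prems(2) this(2)]
  obtain T' where "insert e T \<subseteq> T'" "T' \<subseteq> insert e T \<union> S" "card T' = card S" "T' \<in> F"
    by auto
  then show ?case using e by (intro exI[of _ T']) auto
qed

lemma basis_insert_not_indep:
  assumes "basis F B" "e \<notin> B"
  shows "insert e B \<notin> F"
proof
  assume "insert e B \<in> F"
  then have "insert e B = B" using assms(1) unfolding basis_def by (metis subset_insertI)
  then show False using assms(2) by auto
qed

lemma basis_card_eq:
  assumes "basis F B" "basis F B'"
  shows "card B = card B'"
proof -
  have le: "card B \<le> card B'" if B: "basis F B" and B': "basis F B'" for B B'
    using indep_augment[of B' B] basis_insert_not_indep[OF B'] B B' unfolding basis_def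
    by (meson DiffD2 not_le)
  show ?thesis using le[OF assms] le[OF assms(2,1)] by simp
qed

lemma basis_if_indep_card_eq:
  assumes B: "basis F B" and J: "J \<in> F" "card J = card B"
  shows "basis F J"
  unfolding basis_def
proof (intro conjI ballI impI)
  fix C assume C: "C \<in> F" "J \<subseteq> C"
  show "C = J"
  proof (rule ccontr)
    assume "C \<noteq> J"
    with C have "card B < card C" using J(2) indep_finite psubset_card_mono by (metis psubsetI)
    then obtain e where "e \<in> C - B" "insert e B \<in> F"
      using indep_augment[of B C] B C(1) unfolding basis_def by blast
    then show False using basis_insert_not_indep[OF B] by blast
  qed
qed fact

text \<open>Extend \<open>I - A + y\<close> inside \<open>I + y\<close> to the size of \<open>I\<close>; the one element left out lies in \<open>A\<close>.\<close>
lemma exchange_from_subset: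
  assumes I: "I \<in> F" and y: "y \<notin> I" and A: "A \<subseteq> I" "A \<noteq> {}"
    and indep: "insert y (I - A) \<in> F"
  shows "\<exists>x\<in>A. insert y (I - {x}) \<in> F"
proof -
  have fI: "finite I" using I indep_finite by blast
  have "I - A \<subset> I" using A by blast
  then have "card (I - A) < card I" by (rule psubset_card_mono[OF fI])
  then have "card (insert y (I - A)) \<le> card I" using y fI by simp
  then obtain T where T: "insert y (I - A) \<subseteq> T" "T \<subseteq> insert y I" "card T = card I" "T \<in> F"
    using indep_augment_to_card[OF indep I] by auto
  have "card T < card (insert y I)" using T(3) y fI by simp
  then obtain x where x: "x \<in> insert y I" "x \<notin> T"
    using card_mono[OF indep_finite[OF T(4)]] by (meson not_le subsetI)
  have "x \<in> A" "x \<noteq> y" using x T(1) by auto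
  then have "T \<subseteq> insert y (I - {x})" using T(2) x by auto
  moreover have "card (insert y (I - {x})) = card T"
  proof -
    have "x \<in> I" "finite (I - {x})" "y \<notin> I - {x}" using \<open>x \<in> A\<close> A y fI by auto
    then show ?thesis using card_Suc_Diff1[OF fI] card_insert_disjoint T(3) by metis
  qed
  ultimately have "T = insert y (I - {x})" using fI by (intro card_subset_eq) auto
  then show ?thesis using T(4) \<open>x \<in> A\<close> by auto
qed

lemma symmetric_exchange:
  assumes I: "I \<in> F" and J: "J \<in> F" and card_eq: "card I = card J" and y: "y \<in> J - I"
  shows "\<exists>x\<in>I - J. insert y (I - {x}) \<in> F \<and> insert x (J - {y}) \<in> F"
proof (rule ccontr)
  define A where "A = {x\<in>I - J. insert x (J - {y}) \<in> F}"
  assume "\<not> ?thesis"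
  then have no_exchange: "\<forall>x\<in>A. insert y (I - {x}) \<notin> F" unfolding A_def by blast
  have fJ: "finite J" using J indep_finite by blast
  have Jy: "J - {y} \<in> F" using J indep_subset by blast
  have card_Jy: "card (J - {y}) < card I" using card_Diff1_less[OF fJ, of y] y card_eq by simp
  obtain e where "e \<in> I - (J - {y})" "insert e (J - {y}) \<in> F"
    using indep_augment[OF Jy I card_Jy] by blast
  then have "A \<subseteq> I" "A \<noteq> {}" using y unfolding A_def by auto
  then have IA_y: "insert y (I - A) \<notin> F"
    using exchange_from_subset[of I y A] I y no_exchange by blast
  have small: "card T \<le> card (J - {y})" if T: "T \<subseteq> (J - {y}) \<union> (I - A)" "T \<in> F" for T
  proof (rule ccontr)
    assume "\<not> ?thesis"
    then obtain f where "f \<in> T - (J - {y})" "insert f (J - {y}) \<in> F"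
      using indep_augment[OF Jy T(2)] by auto
    then show False using T(1) y unfolding A_def by auto
  qed
  have IA: "I - A \<in> F" using I indep_subset by blast
  obtain T where T: "I - A \<subseteq> T" "T \<subseteq> (I - A) \<union> (J - {y})" "card T = card (J - {y})" "T \<in> F"
    using indep_augment_to_card[OF IA Jy] small[OF _ IA] by auto
  have "card T < card J" using T(3) card_Jy card_eq by simp
  then obtain f where f: "f \<in> J - T" "insert f T \<in> F" using indep_augment[OF T(4) J] by blast
  show False
  proof (cases "f = y")
    case True
    then show False using IA_y indep_subset[OF f(2)] T(1) by blast
  next
    case False
    then have "card (insert f T) \<le> card (J - {y})" using small[OF _ f(2)] T(2) f(1) by blast
    then show False using T(3) f indep_finite[OF T(4)] by simp
  qed
qed

lemma exchange_bijection:
  assumes "I \<in> F" "J \<in> F" "card I = card J"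
  shows "\<exists>f. bij_betw f (J - I) (I - J) \<and> (\<forall>y\<in>J - I. insert y (I - {f y}) \<in> F)"
  using assms
proof (induction "card (J - I)" arbitrary: J)
  case 0
  then have "J = I" using indep_finite by (metis Diff_eq_empty_iff card_0_eq card_subset_eq finite_Diff)
  then show ?case by (simp add: bij_betw_def)
next
  case (Suc n)
  then obtain y where y: "y \<in> J - I" by (metis card.empty ex_in_conv nat.distinct(1))
  obtain x where x: "x \<in> I - J" "insert y (I - {x}) \<in> F" "insert x (J - {y}) \<in> F"
    using symmetric_exchange[OF Suc.prems y] by blast
  define J' where "J' = insert x (J - {y})"
  have fJ: "finite J" using indep_finite Suc.prems by auto
  have "card J' = Suc (card (J - {y}))" using x fJ unfolding J'_def by (simp add: card_insert_disjoint)
  also have "\<dots> = card J" using card_Suc_Diff1[OF fJ, of y] y by blast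
  finally have card_J': "card I = card J'" using Suc.prems(3) by simp
  have J'I: "J' - I = (J - I) - {y}" and IJ': "I - J' = (I - J) - {x}"
    using x y unfolding J'_def by auto
  have "n = card (J' - I)" using Suc.hyps(2) J'I y fJ by simp
  from Suc.hyps(1)[OF this Suc.prems(1) x(3)[folded J'_def] card_J']
  obtain f where f: "bij_betw f (J' - I) (I - J')" "\<forall>z\<in>J' - I. insert z (I - {f z}) \<in> F"
    by blast
  have "bij_betw (f(y := x)) (J' - I) (I - J')"
    using J'I by (intro bij_betw_cong[THEN iffD1, OF _ f(1)]) auto
  then have "bij_betw (f(y := x)) ((J' - I) \<union> {y}) ((I - J') \<union> {x})"
    using notIn_Un_bij_betw[of y "J' - I" "f(y := x)" "I - J'"] J'I IJ' by simp
  moreover have "(J' - I) \<union> {y} = J - I" "(I - J') \<union> {x} = I - J" using J'I IJ' x y by auto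
  ultimately have "bij_betw (f(y := x)) (J - I) (I - J)" by (simp only:)
  moreover have "\<forall>z\<in>J - I. insert z (I - {(f(y := x)) z}) \<in> F" using f(2) x(2) J'I by auto
  ultimately show ?case by (intro exI[of _ "f(y := x)"] conjI)
qed

lemma indep_insert_if_other_blocked:
  assumes "T \<in> F" "S \<in> F" "card T < card S" "S - T \<subseteq> {a, b}" "insert b T \<notin> F"
  shows "insert a T \<in> F"
  using indep_augment[OF assms(1-3)] assms(4,5) by blast

lemma exchange_indep_iff_after_exchange:
  assumes B: "B \<in> F" and B': "insert y' (B - {x}) \<in> F" and x: "x \<in> B" and y': "y' \<notin> B"
    and blocked: "insert y (B - {x}) \<notin> F"
    and e: "e \<in> B" "e \<noteq> x" and y: "y \<notin> B" "y \<noteq> y'"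
  shows "insert y (B - {e}) \<in> F \<longleftrightarrow> insert y (insert y' (B - {x}) - {e}) \<in> F"
proof -
  define T where "T = insert y (B - {e, x})"
  have fB: "finite B" using B indep_finite by blast
  have "card T < card B"
    using fB e x y card_mono[OF fB, of "{e, x}"] unfolding T_def by (simp add: card_Diff_subset)
  moreover have "card (insert y' (B - {x})) = card B"
    by (metis DiffD1 card_Suc_Diff1 card_insert_disjoint fB finite_Diff x y')
  moreover have "insert e T = insert y (B - {x})" using e unfolding T_def by auto
  moreover have "insert y' T = insert y (insert y' (B - {x}) - {e})" "insert x T = insert y (B - {e})"
    using e x y y' unfolding T_def by auto
  moreover have "T \<subseteq> insert y (B - {e})" "T \<subseteq> insert y (insert y' (B - {x}) - {e})"
    unfolding T_def by auto
  moreover have "insert y' (B - {x}) - T \<subseteq> {y', e}" "B - T \<subseteq> {x, e}" unfolding T_def by auto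
  ultimately show ?thesis
    using indep_insert_if_other_blocked[of T] indep_subset B B' blocked by (metis (no_types, lifting))
qed

lemma insert_Diff_image_Un:
  assumes "x s \<notin> x ` K" "y s \<notin> x ` K"
  shows "(insert (y s) (B - {x s}) - x ` K) \<union> y ` K = (B - x ` insert s K) \<union> y ` insert s K"
  using assms by (auto simp: image_iff)

text \<open>The unique-matching lemma of matroid intersection. Perform the exchange of least potential
  first; by \<open>exchange_indep_iff_after_exchange\<close> this keeps all remaining exchange relations intact.\<close>
lemma simultaneous_exchange_indep:
  fixes \<Phi> :: "'b \<Rightarrow> real"
  assumes "B \<in> F" "finite K" "inj_on x K" "inj_on y K" "x ` K \<subseteq> B" "y ` K \<inter> B = {}"
    and "\<forall>i\<in>K. insert (y i) (B - {x i}) \<in> F"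
    and "\<forall>i\<in>K. \<forall>j\<in>K. i \<noteq> j \<and> insert (y j) (B - {x i}) \<in> F \<longrightarrow> \<Phi> j < \<Phi> i"
  shows "(B - x ` K) \<union> y ` K \<in> F"
  using assms
proof (induction "card K" arbitrary: B K)
  case 0
  then show ?case by simp
next
  case (Suc n)
  obtain s where s: "s \<in> K" "\<forall>i\<in>K. \<Phi> s \<le> \<Phi> i"
    using Suc.hyps(2) Suc.prems(2) by (metis arg_min_if_finite(1,2) card.empty nat.distinct(1) not_le)
  define B' where "B' = insert (y s) (B - {x s})"
  define K' where "K' = K - {s}"
  have "K' \<subseteq> K" unfolding K'_def by blast
  have xs: "x s \<in> B" and ys: "y s \<notin> B" using s Suc.prems(5,6) by auto
  have B': "B' \<in> F" using Suc.prems(7) s unfolding B'_def by auto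
  have x_ne: "x s \<notin> x ` K'" and y_ne: "y s \<notin> y ` K'"
    using s(1) Suc.prems(3,4) unfolding K'_def by (auto simp: inj_on_image_mem_iff)
  have same_exchanges: "insert (y j) (B - {x i}) \<in> F \<longleftrightarrow> insert (y j) (B' - {x i}) \<in> F"
    if "i \<in> K'" "j \<in> K'" for i j
  proof (rule exchange_indep_iff_after_exchange[OF Suc.prems(1) B'[unfolded B'_def] xs ys, folded B'_def])
    show "insert (y j) (B - {x s}) \<notin> F"
      using Suc.prems(8) s that x_ne y_ne unfolding K'_def by force
    show "x i \<in> B" "y j \<notin> B" using that Suc.prems(5,6) \<open>K' \<subseteq> K\<close> by blast+
    show "x i \<noteq> x s" "y j \<noteq> y s" using that x_ne y_ne by (metis image_eqI)+
  qed
  have "(B' - x ` K') \<union> y ` K' \<in> F"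
  proof (rule Suc.hyps(1))
    show "n = card K'" using card_Diff_singleton[OF s(1)] Suc.hyps(2) unfolding K'_def by linarith
    show "x ` K' \<subseteq> B'" using Suc.prems(5) x_ne \<open>K' \<subseteq> K\<close> unfolding B'_def by (auto simp: image_iff)
    show "y ` K' \<inter> B' = {}" using Suc.prems(6) y_ne \<open>K' \<subseteq> K\<close> unfolding B'_def by (auto simp: image_iff)
    show "\<forall>i\<in>K'. \<forall>j\<in>K'. i \<noteq> j \<and> insert (y j) (B' - {x i}) \<in> F \<longrightarrow> \<Phi> j < \<Phi> i"
      using same_exchanges Suc.prems(8) unfolding K'_def by blast
    show "\<forall>i\<in>K'. insert (y i) (B' - {x i}) \<in> F"
      using same_exchanges Suc.prems(7) unfolding K'_def by blast
  qed (use B' Suc.prems(2) inj_on_subset[OF Suc.prems(3) \<open>K' \<subseteq> K\<close>]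
          inj_on_subset[OF Suc.prems(4) \<open>K' \<subseteq> K\<close>] in \<open>auto simp: K'_def\<close>)
  moreover have "K = insert s K'" "y s \<notin> x ` K'" using s(1) ys Suc.prems(5) unfolding K'_def by auto
  ultimately show ?case using x_ne unfolding B'_def by (simp add: insert_Diff_image_Un)
qed

end

section \<open>Feasible distances imply \<open>\<delta>\<close>-optimality\<close>

abbreviation exch_arcs :: "'a set \<Rightarrow> 'a set set \<Rightarrow> 'a set set \<Rightarrow> 'a set \<Rightarrow> ('a \<times> 'a) set" where
  "exch_arcs X I1 I2 B \<equiv> exch_A1 X I1 B \<union> exch_A2 X I2 B"

definition exch_len :: "'a set \<Rightarrow> ('a \<Rightarrow> real) \<Rightarrow> 'a \<Rightarrow> real" where
  "exch_len B w v = (if v \<in> B then w v else - w v)"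

lemma arc_len_eq_exch_len:
  "(u, v) \<in> exch_arcs X I1 I2 B \<Longrightarrow> arc_len X I1 I2 B w u v = exch_len B w u"
  unfolding arc_len_def exch_len_def exch_A1_def exch_A2_def by auto

lemma exch_arcs_alternate:
  "(u, v) \<in> exch_arcs X I1 I2 B \<Longrightarrow> u \<in> B \<longleftrightarrow> (u, v) \<in> exch_A1 X I1 B"
  "(u, v) \<in> exch_arcs X I1 I2 B \<Longrightarrow> v \<in> B \<longleftrightarrow> u \<notin> B"
  unfolding exch_A1_def exch_A2_def by auto

lemma sum_bound_from_matchings:
  fixes q q' w :: "'a \<Rightarrow> real"
  assumes "bij_betw f1 S' S" "bij_betw f2 S' S" "finite S" "x0 \<in> S"
    and "\<forall>v\<in>S - {x0}. q' v = q v"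
    and "\<forall>y\<in>S'. q' (f2 y) \<le> q (f1 y) + w (f1 y) - w y"
  shows "q' x0 - q x0 \<le> sum w S - sum w S'"
proof -
  have "sum q' S = sum (q' \<circ> f2) S'" using sum.reindex_bij_betw[OF assms(2), of q'] by simp
  also have "\<dots> \<le> (\<Sum>y\<in>S'. q (f1 y) + w (f1 y) - w y)" using assms(6) by (intro sum_mono) auto
  also have "\<dots> = sum q S + sum w S - sum w S'"
    using sum.reindex_bij_betw[OF assms(1), of q] sum.reindex_bij_betw[OF assms(1), of w]
    by (simp add: sum.distrib sum_subtractf)
  finally have "sum q' S \<le> sum q S + sum w S - sum w S'" .
  moreover have "sum q' (S - {x0}) = sum q (S - {x0})" using assms(5) by (intro sum.cong) auto
  ultimately show ?thesis
    using sum.remove[OF assms(3,4), of q'] sum.remove[OF assms(3,4), of q] by linarith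
qed

lemma distance_along_exchange_pair:
  fixes d :: "'a \<Rightarrow> 'a \<Rightarrow> real"
  assumes arc: "\<forall>(x, y) \<in> exch_arcs X I1 I2 B. d x y \<le> arc_len X I1 I2 B w x y"
    and tri: "\<forall>x\<in>X. \<forall>(y, z) \<in> exch_arcs X I1 I2 B. d x z \<le> d x y + arc_len X I1 I2 B w y z"
    and x0: "x0 \<in> X" and a1: "(u, y) \<in> exch_A1 X I1 B" and a2: "(y, u') \<in> exch_A2 X I2 B"
  shows "d x0 u' \<le> ((d x0)(x0 := 0)) u + w u - w y"
proof -
  have "u \<in> B" "y \<notin> B" using a1 unfolding exch_A1_def by auto
  then have len: "arc_len X I1 I2 B w u y = w u" "arc_len X I1 I2 B w y u' = - w y"
    using arc_len_eq_exch_len[of u y] arc_len_eq_exch_len[of y u'] a1 a2 by (auto simp: exch_len_def)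
  have "d u y \<le> arc_len X I1 I2 B w u y" using arc a1 by blast
  moreover have "d x0 y \<le> d x0 u + arc_len X I1 I2 B w u y" using tri a1 x0 by blast
  ultimately have "d x0 y \<le> ((d x0)(x0 := 0)) u + w u" using len by (cases "u = x0") auto
  moreover have "d x0 u' \<le> d x0 y + arc_len X I1 I2 B w y u'" using tri a2 x0 by blast
  ultimately show ?thesis using len by linarith
qed

text \<open>Pair up \<open>B - B'\<close> and \<open>B' - B\<close> by exchange bijections in both matroids; every \<open>y \<in> B' - B\<close>
  then gives a two-arc path \<open>f1 y \<rightarrow> y \<rightarrow> f2 y\<close>, along which \<open>d\<close> grows by at most the
  arc lengths. Summing, the excess \<open>d x0 x0\<close> of the distance from a fixed \<open>x0\<close> is at most
  \<open>w(B - B') - w(B' - B)\<close>.\<close>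
lemma delta_optimal_if_distances:
  fixes d :: "'a \<Rightarrow> 'a \<Rightarrow> real"
  assumes "matroid X I1" "matroid X I2" "common_basis I1 I2 B"
    and arc: "\<forall>(x, y) \<in> exch_arcs X I1 I2 B. d x y \<le> arc_len X I1 I2 B w x y"
    and tri: "\<forall>x\<in>X. \<forall>(y, z) \<in> exch_arcs X I1 I2 B. d x z \<le> d x y + arc_len X I1 I2 B w y z"
    and diag: "\<forall>x\<in>X. \<delta> \<le> d x x"
  shows "delta_optimal I1 I2 w \<delta> B"
  unfolding delta_optimal_def
proof (intro allI impI, elim conjE)
  fix B' assume B': "common_basis I1 I2 B'" and ne: "B' \<noteq> B"
  interpret M1: finite_matroid X I1 by unfold_locales fact
  interpret M2: finite_matroid X I2 by unfold_locales fact
  have indep: "B \<in> I1" "B \<in> I2" "B' \<in> I1" "B' \<in> I2"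
    using assms(3) B' unfolding common_basis_def basis_def by auto
  have BX: "B \<subseteq> X" "B' \<subseteq> X" using indep M1.indep_subset_ground by auto
  have fin: "finite B" "finite B'" using indep M1.indep_finite by auto
  have card_eq: "card B = card B'"
    using assms(3) B' M1.basis_card_eq unfolding common_basis_def by blast
  obtain f1 where f1: "bij_betw f1 (B' - B) (B - B')" "\<forall>y\<in>B' - B. insert y (B - {f1 y}) \<in> I1"
    using M1.exchange_bijection[OF indep(1,3) card_eq] by blast
  obtain f2 where f2: "bij_betw f2 (B' - B) (B - B')" "\<forall>y\<in>B' - B. insert y (B - {f2 y}) \<in> I2"
    using M2.exchange_bijection[OF indep(2,4) card_eq] by blast
  have "\<not> B \<subseteq> B'" using card_subset_eq[OF fin(2)] card_eq ne by metis
  then obtain x0 where x0: "x0 \<in> B - B'" by blast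
  have "d x0 x0 - ((d x0)(x0 := 0)) x0 \<le> sum w (B - B') - sum w (B' - B)"
  proof (rule sum_bound_from_matchings[OF f1(1) f2(1) _ x0, where q' = "d x0" and q = "(d x0)(x0 := 0)"])
    have "x0 \<in> X" using x0 BX by auto
    show "\<forall>y\<in>B' - B. d x0 (f2 y) \<le> ((d x0)(x0 := 0)) (f1 y) + w (f1 y) - w y"
    proof
      fix y assume y: "y \<in> B' - B"
      have "f1 y \<in> B - B'" "f2 y \<in> B - B'" using y f1(1) f2(1) by (auto dest: bij_betwE)
      then have "(f1 y, y) \<in> exch_A1 X I1 B" "(y, f2 y) \<in> exch_A2 X I2 B"
        using y f1(2) f2(2) BX unfolding exch_A1_def exch_A2_def by auto
      then show "d x0 (f2 y) \<le> ((d x0)(x0 := 0)) (f1 y) + w (f1 y) - w y"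
        by (rule distance_along_exchange_pair[OF arc tri \<open>x0 \<in> X\<close>])
    qed
  qed (use fin in auto)
  then have "d x0 x0 \<le> sum w (B - B') - sum w (B' - B)" by simp
  moreover have "sum w B = sum w (B \<inter> B') + sum w (B - B')" "sum w B' = sum w (B \<inter> B') + sum w (B' - B)"
    using fin by (simp_all add: sum.Int_Diff[of B w B'] sum.Int_Diff[of B' w B] Int_commute)
  moreover have "\<delta> \<le> d x0 x0" using diag x0 BX by auto
  ultimately show "sum w B' + \<delta> \<le> sum w B" by linarith
qed

section \<open>Alternating cycles\<close>

text \<open>The closed walk \<open>xs 0 \<rightarrow> ys 0 \<rightarrow> xs 1 \<rightarrow> \<dots> \<rightarrow> ys (k - 1) \<rightarrow> xs 0\<close>; vertices may repeat.\<close>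
definition alt_cycle ::
  "('a \<Rightarrow> 'a \<Rightarrow> bool) \<Rightarrow> ('a \<Rightarrow> 'a \<Rightarrow> bool) \<Rightarrow> nat \<Rightarrow> (nat \<Rightarrow> 'a) \<Rightarrow> (nat \<Rightarrow> 'a) \<Rightarrow> bool" where
  "alt_cycle R1 R2 k xs ys \<longleftrightarrow> 0 < k \<and> (\<forall>i<k. R1 (xs i) (ys i) \<and> R2 (ys i) (xs (Suc i mod k)))"

definition alt_cycle_len :: "('a \<Rightarrow> real) \<Rightarrow> nat \<Rightarrow> (nat \<Rightarrow> 'a) \<Rightarrow> (nat \<Rightarrow> 'a) \<Rightarrow> real" where
  "alt_cycle_len c k xs ys = (\<Sum>i<k. c (xs i) + c (ys i))"

definition alt_prefix_len :: "('a \<Rightarrow> real) \<Rightarrow> (nat \<Rightarrow> 'a) \<Rightarrow> (nat \<Rightarrow> 'a) \<Rightarrow> nat \<Rightarrow> real" where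
  "alt_prefix_len c xs ys i = alt_cycle_len c i xs ys + c (xs i)"

lemma sum_lessThan_add_split:
  fixes f :: "nat \<Rightarrow> 'b::comm_monoid_add"
  shows "(\<Sum>t<p + q. f t) = (\<Sum>t<p. f t) + (\<Sum>t<q. f (p + t))"
  by (induction q) (simp_all add: add.assoc)

lemma alt_cycle_len_Suc:
  "alt_cycle_len c (Suc i) xs ys = alt_prefix_len c xs ys i + c (ys i)"
  unfolding alt_cycle_len_def alt_prefix_len_def by simp

lemma alt_cycle_len_segment:
  "i \<le> k \<Longrightarrow> (\<Sum>t<k - i. c (xs (i + t)) + c (ys (i + t))) = alt_cycle_len c k xs ys - alt_cycle_len c i xs ys"
  unfolding alt_cycle_len_def using sum_lessThan_add_split[of "\<lambda>t. c (xs t) + c (ys t)" i "k - i"]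
  by simp

lemma alt_cycle_reindex:
  assumes "alt_cycle R1 R2 k xs ys" "0 < m"
    and "\<And>t. t < m \<Longrightarrow> \<tau> t < k"
    and "\<And>t. t < m \<Longrightarrow> R1 (xs (\<sigma> t)) (ys (\<tau> t))"
    and "\<And>t. t < m \<Longrightarrow> \<sigma> (Suc t mod m) = Suc (\<tau> t) mod k"
  shows "alt_cycle R1 R2 m (xs \<circ> \<sigma>) (ys \<circ> \<tau>)"
  using assms unfolding alt_cycle_def by (metis comp_apply)

text \<open>A chord from \<open>xs i\<close> forward to \<open>ys j\<close> cuts out the part of the cycle strictly between them.\<close>
lemma alt_cycle_forward_chord:
  assumes cyc: "alt_cycle R1 R2 k xs ys" and ij: "i < j" "j < k" and chord: "R1 (xs i) (ys j)"
  obtains xs' ys' where "alt_cycle R1 R2 (k - (j - i)) xs' ys'"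
    "alt_cycle_len c (k - (j - i)) xs' ys' =
       alt_cycle_len c k xs ys - (alt_prefix_len c xs ys j - alt_prefix_len c xs ys i)"
proof
  define m where "m = k - (j - i)"
  define \<sigma> where "\<sigma> t = (if t \<le> i then t else t + (j - i))" for t
  define \<tau> where "\<tau> t = (if t < i then t else t + (j - i))" for t
  have step: "R1 (xs t) (ys t)" if "t < k" for t using cyc that unfolding alt_cycle_def by auto
  show "alt_cycle R1 R2 m (xs \<circ> \<sigma>) (ys \<circ> \<tau>)"
  proof (rule alt_cycle_reindex[OF cyc])
    fix t assume t: "t < m"
    show "\<tau> t < k" using t ij unfolding \<tau>_def m_def by auto
    show "R1 (xs (\<sigma> t)) (ys (\<tau> t))"
      using step[of t] step[of "t + (j - i)"] chord t ij unfolding \<sigma>_def \<tau>_def m_def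
      by (cases "t < i"; cases "t = i") auto
    show "\<sigma> (Suc t mod m) = Suc (\<tau> t) mod k"
    proof (cases "Suc t < m")
      case True
      then show ?thesis unfolding \<sigma>_def \<tau>_def m_def by auto
    next
      case False
      then have "Suc t = m" using t by simp
      moreover from this have "\<tau> t = k - 1" using ij unfolding \<tau>_def m_def by auto
      ultimately show ?thesis using ij unfolding \<sigma>_def by simp
    qed
  qed (use ij in \<open>simp add: m_def\<close>)
  define f where "f t = c (xs t) + c (ys t)" for t
  have m: "m = Suc i + (k - Suc j)" using ij unfolding m_def by simp
  have "alt_cycle_len c m (xs \<circ> \<sigma>) (ys \<circ> \<tau>)
      = (\<Sum>t<Suc i. c (xs (\<sigma> t)) + c (ys (\<tau> t))) + (\<Sum>t<k - Suc j. f (Suc j + t))"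
    unfolding alt_cycle_len_def m sum_lessThan_add_split f_def \<sigma>_def \<tau>_def using ij
    by (simp add: algebra_simps)
  also have "(\<Sum>t<Suc i. c (xs (\<sigma> t)) + c (ys (\<tau> t))) = alt_prefix_len c xs ys i + c (ys j)"
    unfolding alt_prefix_len_def alt_cycle_len_def \<sigma>_def \<tau>_def using ij by simp
  also have "(\<Sum>t<k - Suc j. f (Suc j + t)) = alt_cycle_len c k xs ys - alt_cycle_len c (Suc j) xs ys"
    unfolding f_def using alt_cycle_len_segment[of "Suc j" k] ij by simp
  finally show "alt_cycle_len c m (xs \<circ> \<sigma>) (ys \<circ> \<tau>) =
      alt_cycle_len c k xs ys - (alt_prefix_len c xs ys j - alt_prefix_len c xs ys i)"
    unfolding alt_cycle_len_Suc by (simp add: comp_def)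
qed

text \<open>A chord from \<open>xs i\<close> back to \<open>ys j\<close> closes the part of the cycle strictly between them.\<close>
lemma alt_cycle_backward_chord:
  assumes cyc: "alt_cycle R1 R2 k xs ys" and ij: "j < i" "i < k" and chord: "R1 (xs i) (ys j)"
  obtains xs' ys' where "alt_cycle R1 R2 (i - j) xs' ys'"
    "alt_cycle_len c (i - j) xs' ys' = alt_prefix_len c xs ys i - alt_prefix_len c xs ys j"
proof
  define \<sigma> where "\<sigma> t = Suc j + t" for t
  define \<tau> where "\<tau> t = (if Suc t = i - j then j else Suc j + t)" for t
  have step: "R1 (xs t) (ys t)" if "t < k" for t using cyc that unfolding alt_cycle_def by auto
  show "alt_cycle R1 R2 (i - j) (xs \<circ> \<sigma>) (ys \<circ> \<tau>)"
  proof (rule alt_cycle_reindex[OF cyc])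
    fix t assume t: "t < i - j"
    show "\<tau> t < k" using t ij unfolding \<tau>_def by auto
    show "R1 (xs (\<sigma> t)) (ys (\<tau> t))"
    proof (cases "Suc t = i - j")
      case True
      then have "\<sigma> t = i" "\<tau> t = j" using ij unfolding \<sigma>_def \<tau>_def by auto
      then show ?thesis using chord by simp
    qed (use step[of "Suc j + t"] t ij in \<open>auto simp: \<sigma>_def \<tau>_def\<close>)
    show "\<sigma> (Suc t mod (i - j)) = Suc (\<tau> t) mod k"
      using t ij unfolding \<sigma>_def \<tau>_def by (cases "Suc t = i - j") auto
  qed (use ij in auto)
  define m where "m = i - Suc j"
  have m: "i - j = Suc m" and "Suc (j + m) = i" using ij unfolding m_def by auto
  have "alt_cycle_len c (i - j) (xs \<circ> \<sigma>) (ys \<circ> \<tau>)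
      = (\<Sum>t<m. c (xs (Suc j + t)) + c (ys (Suc j + t))) + c (xs i) + c (ys j)"
    unfolding alt_cycle_len_def m \<sigma>_def \<tau>_def using \<open>Suc (j + m) = i\<close> by (simp add: algebra_simps)
  also have "(\<Sum>t<m. c (xs (Suc j + t)) + c (ys (Suc j + t))) = alt_cycle_len c i xs ys - alt_cycle_len c (Suc j) xs ys"
    using alt_cycle_len_segment[of "Suc j" i c xs ys] ij unfolding m_def by simp
  finally show "alt_cycle_len c (i - j) (xs \<circ> \<sigma>) (ys \<circ> \<tau>) = alt_prefix_len c xs ys i - alt_prefix_len c xs ys j"
    unfolding alt_cycle_len_Suc alt_prefix_len_def by (simp add: comp_def)
qed

lemma sum_lessThan_rotate:
  assumes "0 < k"
  shows "(\<Sum>i<k. g (Suc i mod k)) = (\<Sum>i<k. g i)"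
proof -
  obtain n where k: "k = Suc n" using assms gr0_implies_Suc by blast
  have "(\<Sum>i<Suc n. g (Suc i mod Suc n)) = (\<Sum>i<n. g (Suc i)) + g 0"
    by (simp add: sum.lessThan_Suc)
  also have "\<dots> = (\<Sum>i<Suc n. g i)" by (subst sum.lessThan_Suc_shift) (simp add: add.commute)
  finally show ?thesis unfolding k .
qed

lemma lessThan_image_rotate: "0 < k \<Longrightarrow> (\<lambda>i. Suc i mod k) ` {..<k} = {..<k}"
proof (intro equalityI subsetI)
  fix j assume "0 < k" "j \<in> {..<k}"
  then have "j = Suc ((j + k - 1) mod k) mod k" "(j + k - 1) mod k < k"
    by (simp_all add: mod_Suc_eq)
  then show "j \<in> (\<lambda>i. Suc i mod k) ` {..<k}" by blast
qed auto

lemma lessThan_image_rev: "(\<lambda>i. k - Suc i) ` {..<k} = {..<k}"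
proof (intro equalityI subsetI)
  fix j assume "j \<in> {..<k}"
  then have "j = k - Suc (k - Suc j)" "k - Suc j < k" by auto
  then show "j \<in> (\<lambda>i. k - Suc i) ` {..<k}" by blast
qed auto

text \<open>The reversed cycle visits \<open>xs 0, ys (k - 1), xs (k - 1), ys (k - 2), \<dots>\<close>.\<close>
lemma alt_cycle_reverse:
  assumes "alt_cycle R1 R2 k xs ys"
  shows "alt_cycle (\<lambda>a b. R2 b a) (\<lambda>a b. R1 b a) k (\<lambda>i. xs (Suc (k - Suc i) mod k)) (\<lambda>i. ys (k - Suc i))"
  unfolding alt_cycle_def
proof (intro conjI allI impI)
  have step: "R1 (xs t) (ys t)" "R2 (ys t) (xs (Suc t mod k))" if "t < k" for t
    using assms that unfolding alt_cycle_def by auto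
  show "0 < k" using assms unfolding alt_cycle_def by blast
  fix i assume i: "i < k"
  show "R2 (ys (k - Suc i)) (xs (Suc (k - Suc i) mod k))" using step(2)[of "k - Suc i"] i by simp
  show "R1 (xs (Suc (k - Suc (Suc i mod k)) mod k)) (ys (k - Suc i))"
  proof (cases "Suc i < k")
    case True
    then show ?thesis using step(1)[of "k - Suc i"] by (simp add: Suc_diff_Suc)
  next
    case False
    then have "Suc i = k" "k - Suc i = 0" using i by auto
    then show ?thesis using step(1)[of 0] by simp
  qed
qed

lemma alt_cycle_len_reverse:
  assumes "0 < k"
  shows "alt_cycle_len c k (\<lambda>i. xs (Suc (k - Suc i) mod k)) (\<lambda>i. ys (k - Suc i)) = alt_cycle_len c k xs ys"
  unfolding alt_cycle_len_def sum.distrib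
  using sum.nat_diff_reindex[of "\<lambda>i. c (xs (Suc i mod k))" k] sum.nat_diff_reindex[of "\<lambda>i. c (ys i)" k]
    sum_lessThan_rotate[OF assms, of "\<lambda>i. c (xs i)"] by simp

lemma alt_cycle_reverse_image:
  assumes "0 < k"
  shows "(\<lambda>i. xs (Suc (k - Suc i) mod k)) ` {..<k} = xs ` {..<k}"
    and "(\<lambda>i. ys (k - Suc i)) ` {..<k} = ys ` {..<k}"
proof -
  have "(\<lambda>i. xs (Suc (k - Suc i) mod k)) ` {..<k} = xs ` (\<lambda>i. Suc i mod k) ` (\<lambda>i. k - Suc i) ` {..<k}"
    by (simp add: image_image)
  then show "(\<lambda>i. xs (Suc (k - Suc i) mod k)) ` {..<k} = xs ` {..<k}"
    by (simp only: lessThan_image_rev lessThan_image_rotate[OF assms])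
  have "(\<lambda>i. ys (k - Suc i)) ` {..<k} = ys ` (\<lambda>i. k - Suc i) ` {..<k}" by (simp add: image_image)
  then show "(\<lambda>i. ys (k - Suc i)) ` {..<k} = ys ` {..<k}" by (simp only: lessThan_image_rev)
qed

locale min_short_alt_cycle =
  fixes R1 R2 :: "'a \<Rightarrow> 'a \<Rightarrow> bool" and c :: "'a \<Rightarrow> real" and \<delta> :: real
    and k :: nat and xs ys :: "nat \<Rightarrow> 'a"
  assumes cycle: "alt_cycle R1 R2 k xs ys"
    and short: "alt_cycle_len c k xs ys < \<delta>"
    and delta_nonneg: "0 \<le> \<delta>"
    and smaller_cycles_long: "\<And>k' xs' ys'. alt_cycle R1 R2 k' xs' ys' \<Longrightarrow> k' < k \<Longrightarrow> \<delta> \<le> alt_cycle_len c k' xs' ys'"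
begin

lemma k_pos: "0 < k"
  using cycle unfolding alt_cycle_def by blast

lemma step: "i < k \<Longrightarrow> R1 (xs i) (ys i)"
  using cycle unfolding alt_cycle_def by blast

text \<open>The prefix length, tilted by a small multiple of the position to break ties.\<close>
definition chord_potential :: "nat \<Rightarrow> real" where
  "chord_potential i = alt_prefix_len c xs ys i + real i * ((\<delta> - alt_cycle_len c k xs ys) / real k)"

text \<open>Both chord shortcuts are shorter alternating cycles, hence of length at least \<open>\<delta>\<close>.\<close>
lemma chord_potential_decreasing:
  assumes ij: "i < k" "j < k" "i \<noteq> j" and chord: "R1 (xs i) (ys j)"
  shows "chord_potential j < chord_potential i"
proof -
  define P where "P = alt_prefix_len c xs ys"
  define e where "e = (\<delta> - alt_cycle_len c k xs ys) / real k"
  have e: "0 < e" "real k * e = \<delta> - alt_cycle_len c k xs ys"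
    using short k_pos unfolding e_def by auto
  show ?thesis
  proof (cases "i < j")
    case True
    obtain xs' ys' where cyc': "alt_cycle R1 R2 (k - (j - i)) xs' ys'"
      and len': "alt_cycle_len c (k - (j - i)) xs' ys' = alt_cycle_len c k xs ys - (P j - P i)"
      using alt_cycle_forward_chord[OF cycle True ij(2) chord] unfolding P_def by blast
    have "k - (j - i) < k" using True ij by simp
    with cyc' len' have "\<delta> \<le> alt_cycle_len c k xs ys - (P j - P i)" using smaller_cycles_long by fastforce
    moreover have "real (j - i) * e < real k * e" using e(1) True ij by simp
    ultimately show ?thesis using True e(2) unfolding chord_potential_def P_def e_def[symmetric]
      by (simp add: of_nat_diff algebra_simps)
  next
    case False
    then have ji: "j < i" using ij by simp
    obtain xs' ys' where cyc': "alt_cycle R1 R2 (i - j) xs' ys'"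
      and len': "alt_cycle_len c (i - j) xs' ys' = P i - P j"
      using alt_cycle_backward_chord[OF cycle ji ij(1) chord] unfolding P_def by blast
    have "i - j < k" using ij by simp
    with cyc' len' have "\<delta> \<le> P i - P j" using smaller_cycles_long by fastforce
    moreover have "real j * e < real i * e" using e(1) ji by simp
    ultimately show ?thesis using delta_nonneg unfolding chord_potential_def P_def e_def[symmetric]
      by linarith
  qed
qed

lemma inj_on_xs: "inj_on xs {..<k}"
proof (rule inj_onI, rule ccontr)
  fix a b assume "a \<in> {..<k}" "b \<in> {..<k}" "xs a = xs b" "a \<noteq> b"
  then show False using chord_potential_decreasing[of a b] chord_potential_decreasing[of b a] step
    by fastforce
qed

lemma inj_on_ys: "inj_on ys {..<k}"
proof (rule inj_onI, rule ccontr)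
  fix a b assume "a \<in> {..<k}" "b \<in> {..<k}" "ys a = ys b" "a \<noteq> b"
  then show False using chord_potential_decreasing[of a b] chord_potential_decreasing[of b a] step
    by fastforce
qed

lemma reverse:
  "min_short_alt_cycle (\<lambda>a b. R2 b a) (\<lambda>a b. R1 b a) c \<delta> k
     (\<lambda>i. xs (Suc (k - Suc i) mod k)) (\<lambda>i. ys (k - Suc i))"
proof
  show "alt_cycle (\<lambda>a b. R2 b a) (\<lambda>a b. R1 b a) k (\<lambda>i. xs (Suc (k - Suc i) mod k)) (\<lambda>i. ys (k - Suc i))"
    by (rule alt_cycle_reverse[OF cycle])
  show "alt_cycle_len c k (\<lambda>i. xs (Suc (k - Suc i) mod k)) (\<lambda>i. ys (k - Suc i)) < \<delta>"
    using short alt_cycle_len_reverse[OF k_pos, of c xs ys] by simp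
  fix k' xs' ys' assume cyc': "alt_cycle (\<lambda>a b. R2 b a) (\<lambda>a b. R1 b a) k' xs' ys'" and "k' < k"
  have "0 < k'" using cyc' unfolding alt_cycle_def by blast
  from alt_cycle_reverse[OF cyc'] \<open>k' < k\<close>
  have "\<delta> \<le> alt_cycle_len c k' (\<lambda>i. xs' (Suc (k' - Suc i) mod k')) (\<lambda>i. ys' (k' - Suc i))"
    by (intro smaller_cycles_long) simp_all
  then show "\<delta> \<le> alt_cycle_len c k' xs' ys'" using alt_cycle_len_reverse[OF \<open>0 < k'\<close>, of c xs' ys'] by simp
qed (rule delta_nonneg)

end

lemma (in finite_matroid) min_short_alt_cycle_exchange_indep:
  assumes cyc: "min_short_alt_cycle R1 R2 c \<delta> k xs ys" and B: "B \<in> F"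
    and R1: "\<And>x y. R1 x y \<longleftrightarrow> x \<in> B \<and> y \<in> X - B \<and> insert y (B - {x}) \<in> F"
  shows "(B - xs ` {..<k}) \<union> ys ` {..<k} \<in> F"
proof -
  interpret min_short_alt_cycle R1 R2 c \<delta> k xs ys by (fact cyc)
  have in_B: "xs i \<in> B" "ys i \<notin> B" "insert (ys i) (B - {xs i}) \<in> F" if "i < k" for i
    using step[OF that] R1 by auto
  show ?thesis
  proof (rule simultaneous_exchange_indep[OF B _ inj_on_xs inj_on_ys, where \<Phi> = chord_potential])
    show "\<forall>i\<in>{..<k}. \<forall>j\<in>{..<k}. i \<noteq> j \<and> insert (ys j) (B - {xs i}) \<in> F
        \<longrightarrow> chord_potential j < chord_potential i"
      using chord_potential_decreasing R1 in_B step indep_subset_ground by (auto 4 3)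
  qed (use in_B in auto)
qed

lemma card_exchange:
  assumes "finite B" "inj_on x K" "inj_on y K" "x ` K \<subseteq> B" "y ` K \<inter> B = {}"
  shows "card ((B - x ` K) \<union> y ` K) = card B"
proof -
  have fin: "finite (x ` K)" "finite (y ` K)"
    using assms(1,2,4) finite_subset finite_imageD[OF _ assms(2)] finite_imageI by blast+
  have "card ((B - x ` K) \<union> y ` K) = card (B - x ` K) + card (y ` K)"
    using assms(1,5) fin by (intro card_Un_disjoint) auto
  also have "card (B - x ` K) = card B - card (x ` K)" by (rule card_Diff_subset[OF fin(1) assms(4)])
  also have "card (x ` K) = card (y ` K)" using assms(2,3) by (simp add: card_image)
  finally show ?thesis using card_mono[OF assms(1,4)] assms(2,3) by (simp add: card_image)
qed

lemma sum_exchange: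
  fixes w :: "'a \<Rightarrow> real"
  assumes "finite B" "inj_on x K" "inj_on y K" "x ` K \<subseteq> B" "y ` K \<inter> B = {}"
  shows "sum w ((B - x ` K) \<union> y ` K) = sum w B - (\<Sum>i\<in>K. w (x i)) + (\<Sum>i\<in>K. w (y i))"
proof -
  have fin: "finite (x ` K)" "finite (y ` K)"
    using assms(1,2,4) finite_subset finite_imageD[OF _ assms(2)] finite_imageI by blast+
  have "sum w ((B - x ` K) \<union> y ` K) = sum w (B - x ` K) + sum w (y ` K)"
    using assms(1,5) fin by (intro sum.union_disjoint) auto
  also have "sum w (B - x ` K) = sum w B - sum w (x ` K)" using assms(1,4) by (rule sum_diff)
  finally show ?thesis using assms(2,3) by (simp add: sum.reindex)
qed

lemma common_basis_if_indep_card: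
  assumes "common_basis I1 I2 B" "matroid X I1" "matroid X I2"
    and "B' \<in> I1" "B' \<in> I2" "card B' = card B"
  shows "common_basis I1 I2 B'"
  using assms finite_matroid.basis_if_indep_card_eq[of X] unfolding common_basis_def finite_matroid_def
  by blast

text \<open>Exchanging the \<open>B\<close>-vertices of the cycle for its other vertices is possible in both matroids
  (in the second one along the reversed cycle) and lowers the weight by the cycle length.\<close>
lemma not_delta_optimal_if_min_short_alt_cycle:
  assumes m1: "matroid X I1" and m2: "matroid X I2" and B: "common_basis I1 I2 B"
    and cyc: "min_short_alt_cycle (\<lambda>x y. (x, y) \<in> exch_A1 X I1 B) (\<lambda>y x. (y, x) \<in> exch_A2 X I2 B)
                (exch_len B w) \<delta> k xs ys"
  shows "\<not> delta_optimal I1 I2 w \<delta> B"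
proof
  assume opt: "delta_optimal I1 I2 w \<delta> B"
  interpret M1: finite_matroid X I1 by unfold_locales fact
  interpret M2: finite_matroid X I2 by unfold_locales fact
  interpret C: min_short_alt_cycle "\<lambda>x y. (x, y) \<in> exch_A1 X I1 B" "\<lambda>y x. (y, x) \<in> exch_A2 X I2 B"
      "exch_len B w" \<delta> k xs ys
    by (fact cyc)
  define B' where "B' = (B - xs ` {..<k}) \<union> ys ` {..<k}"
  have indep: "B \<in> I1" "B \<in> I2" using B unfolding common_basis_def basis_def by auto
  have in_B: "xs i \<in> B" "ys i \<notin> B" if "i < k" for i using C.step[OF that] unfolding exch_A1_def by auto
  have "B' \<in> I1"
    unfolding B'_def by (rule M1.min_short_alt_cycle_exchange_indep[OF cyc indep(1)]) (auto simp: exch_A1_def)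
  moreover have "B' \<in> I2"
    using M2.min_short_alt_cycle_exchange_indep[OF C.reverse indep(2)]
    unfolding B'_def alt_cycle_reverse_image[OF C.k_pos] by (auto simp: exch_A2_def)
  moreover have "card B' = card B"
    unfolding B'_def using in_B M1.indep_finite[OF indep(1)] C.inj_on_xs C.inj_on_ys
    by (intro card_exchange) auto
  ultimately have "common_basis I1 I2 B'" using common_basis_if_indep_card[OF B m1 m2] by blast
  moreover have "B' \<noteq> B" using in_B C.k_pos unfolding B'_def by auto
  ultimately have "sum w B' + \<delta> \<le> sum w B" using opt unfolding delta_optimal_def by blast
  moreover have "sum w B' = sum w B - alt_cycle_len (exch_len B w) k xs ys"
    unfolding B'_def using in_B M1.indep_finite[OF indep(1)] C.inj_on_xs C.inj_on_ys
    by (subst sum_exchange) (auto simp: alt_cycle_len_def exch_len_def sum.distrib sum_subtractf)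
  ultimately show False using C.short by linarith
qed

lemma alt_cycle_len_ge_if_delta_optimal:
  assumes "matroid X I1" "matroid X I2" "common_basis I1 I2 B" "0 \<le> \<delta>"
    and opt: "delta_optimal I1 I2 w \<delta> B"
    and cyc: "alt_cycle (\<lambda>x y. (x, y) \<in> exch_A1 X I1 B) (\<lambda>y x. (y, x) \<in> exch_A2 X I2 B) k xs ys"
  shows "\<delta> \<le> alt_cycle_len (exch_len B w) k xs ys"
proof (rule ccontr)
  define R1 where "R1 = (\<lambda>x y. (x, y) \<in> exch_A1 X I1 B)"
  define R2 where "R2 = (\<lambda>y x. (y, x) \<in> exch_A2 X I2 B)"
  define short where "short k \<longleftrightarrow> (\<exists>xs ys. alt_cycle R1 R2 k xs ys \<and> alt_cycle_len (exch_len B w) k xs ys < \<delta>)" for k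
  assume "\<not> ?thesis"
  then have "short k" using cyc unfolding short_def R1_def R2_def by (auto simp: not_le)
  then obtain k0 where "short k0" and min: "\<And>k'. k' < k0 \<Longrightarrow> \<not> short k'"
    using exists_least_iff[of short] by blast
  then obtain xs0 ys0 where "alt_cycle R1 R2 k0 xs0 ys0" "alt_cycle_len (exch_len B w) k0 xs0 ys0 < \<delta>"
    unfolding short_def by blast
  then have "min_short_alt_cycle R1 R2 (exch_len B w) \<delta> k0 xs0 ys0"
    using assms(4) min unfolding short_def by unfold_locales (auto simp: not_less)
  then show False using not_delta_optimal_if_min_short_alt_cycle[OF assms(1-3)] opt unfolding R1_def R2_def
    by blast
qed

section \<open>Shortest-walk distances\<close>

definition is_walk :: "('a \<times> 'a) set \<Rightarrow> nat \<Rightarrow> (nat \<Rightarrow> 'a) \<Rightarrow> bool" where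
  "is_walk E n v \<longleftrightarrow> (\<forall>t<n. (v t, v (Suc t)) \<in> E)"

text \<open>Each arc is charged the weight of its tail, as the arc lengths of the exchange graph are.\<close>
definition walk_len :: "('a \<Rightarrow> real) \<Rightarrow> nat \<Rightarrow> (nat \<Rightarrow> 'a) \<Rightarrow> real" where
  "walk_len c n v = (\<Sum>t<n. c (v t))"

lemma walk_len_cong: "(\<And>t. t < n \<Longrightarrow> v t = v' t) \<Longrightarrow> walk_len c n v = walk_len c n v'"
  unfolding walk_len_def by simp

lemma is_walk_snoc:
  assumes "is_walk E n v" "(v n, z) \<in> E"
  shows "is_walk E (Suc n) (v(Suc n := z))" "walk_len c (Suc n) (v(Suc n := z)) = walk_len c n v + c (v n)"
  using assms unfolding is_walk_def walk_len_def by (auto simp: less_Suc_eq)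

lemma is_walk_segment:
  assumes "is_walk E n v" "a \<le> b" "b \<le> n"
  shows "is_walk E (b - a) (\<lambda>t. v (a + t))"
  using assms unfolding is_walk_def by auto

lemma is_walk_cut:
  assumes walk: "is_walk E n v" and ab: "a < b" "b \<le> n" "v a = v b"
  defines "v' \<equiv> \<lambda>t. if t \<le> a then v t else v (t + (b - a))"
  shows "is_walk E (n - (b - a)) v'" "v' 0 = v 0" "v' (n - (b - a)) = v n"
    and "walk_len c n v = walk_len c (n - (b - a)) v' + walk_len c (b - a) (\<lambda>t. v (a + t))"
proof -
  show "is_walk E (n - (b - a)) v'"
    unfolding is_walk_def
  proof (intro allI impI)
    fix t assume "t < n - (b - a)"
    then show "(v' t, v' (Suc t)) \<in> E"
      using walk ab unfolding is_walk_def v'_def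
      by (cases "t < a"; cases "t = a") (auto simp: Suc_diff_le)
  qed
  show "v' 0 = v 0" "v' (n - (b - a)) = v n" using ab unfolding v'_def by (cases "b = n"; auto)+
  have n: "n = a + (b - a) + (n - b)" and n': "n - (b - a) = a + (n - b)" using ab by auto
  have "walk_len c n v = (\<Sum>t<a + (b - a) + (n - b). c (v t))" unfolding walk_len_def using n by simp
  also have "\<dots> = walk_len c a v + walk_len c (b - a) (\<lambda>t. v (a + t)) + (\<Sum>t<n - b. c (v (b + t)))"
    unfolding sum_lessThan_add_split walk_len_def using ab by simp
  finally have "walk_len c n v = walk_len c a v + walk_len c (b - a) (\<lambda>t. v (a + t)) + (\<Sum>t<n - b. c (v (b + t)))" .
  moreover have "walk_len c (n - (b - a)) v' = walk_len c a v + (\<Sum>t<n - b. c (v (b + t)))"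
    unfolding walk_len_def n' sum_lessThan_add_split using ab
    by (intro arg_cong2[where f = "(+)"] sum.cong) (auto simp: v'_def add.commute)
  ultimately show "walk_len c n v = walk_len c (n - (b - a)) v' + walk_len c (b - a) (\<lambda>t. v (a + t))"
    by simp
qed

locale long_closed_walks =
  fixes E :: "('a \<times> 'a) set" and X :: "'a set" and c :: "'a \<Rightarrow> real" and \<delta> :: real
  assumes arcs_in: "(x, y) \<in> E \<Longrightarrow> x \<in> X \<and> y \<in> X"
    and finite_vertices: "finite X"
    and delta_nonneg: "0 \<le> \<delta>"
    and closed_walk_long: "is_walk E n v \<Longrightarrow> 0 < n \<Longrightarrow> v n = v 0 \<Longrightarrow> \<delta> \<le> walk_len c n v"
begin

abbreviation "N \<equiv> card X"

lemma walk_in_vertices: "is_walk E n v \<Longrightarrow> t < n \<Longrightarrow> v t \<in> X"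
  using arcs_in unfolding is_walk_def by blast

lemma walk_shorten:
  assumes "is_walk E n v" "0 < n"
  shows "\<exists>n' v'. is_walk E n' v' \<and> 0 < n' \<and> n' \<le> N \<and> v' 0 = v 0 \<and> v' n' = v n
    \<and> walk_len c n' v' \<le> walk_len c n v"
  using assms
proof (induction n arbitrary: v rule: less_induct)
  case (less n)
  show ?case
  proof (cases "n \<le> N")
    case True
    then show ?thesis using less.prems by blast
  next
    case False
    have "v ` {..N} \<subseteq> X" using walk_in_vertices[OF less.prems(1)] False by auto
    then have "\<not> inj_on v {..N}"
      using card_mono[OF finite_vertices] card_image by (metis card_atMost not_less_eq_eq order_refl)
    then obtain a b where ab: "a < b" "b \<le> N" "v a = v b"
      unfolding inj_on_def by (metis atMost_iff linorder_neqE_nat)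
    define v' where "v' t = (if t \<le> a then v t else v (t + (b - a)))" for t
    have "b \<le> n" "n - (b - a) < n" "0 < n - (b - a)" using ab False by auto
    note cut = is_walk_cut[OF less.prems(1) ab(1) \<open>b \<le> n\<close> ab(3), folded v'_def]
    have "\<delta> \<le> walk_len c (b - a) (\<lambda>t. v (a + t))"
      using closed_walk_long[OF is_walk_segment[OF less.prems(1)]] ab \<open>b \<le> n\<close> by simp
    then have "walk_len c (n - (b - a)) v' \<le> walk_len c n v" using cut(4)[of c] delta_nonneg by simp
    with less.IH[OF \<open>n - (b - a) < n\<close> cut(1) \<open>0 < n - (b - a)\<close>] cut(2,3) show ?thesis
      by fastforce
  qed
qed

lemma finite_walk_lens: "finite {walk_len c n v |n v. n \<le> N \<and> is_walk E n v}"
proof (rule finite_subset)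
  show "{walk_len c n v |n v. n \<le> N \<and> is_walk E n v}
      \<subseteq> (\<lambda>(n, f). walk_len c n f) ` (SIGMA n:{..N}. {..<n} \<rightarrow>\<^sub>E X)"
  proof clarify
    fix n v assume "n \<le> N" "is_walk E n v"
    then have "(n, restrict v {..<n}) \<in> (SIGMA n:{..N}. {..<n} \<rightarrow>\<^sub>E X)"
      using walk_in_vertices by auto
    moreover have "walk_len c n v = walk_len c n (restrict v {..<n})" by (rule walk_len_cong) simp
    ultimately show "walk_len c n v \<in> (\<lambda>(n, f). walk_len c n f) ` (SIGMA n:{..N}. {..<n} \<rightarrow>\<^sub>E X)"
      by (intro image_eqI[where x = "(n, restrict v {..<n})"]) auto
  qed
qed (use finite_vertices in \<open>auto intro: finite_PiE\<close>)

definition weight_bound :: real where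
  "weight_bound = (\<Sum>u\<in>X. \<bar>c u\<bar>)"

lemma walk_len_lower_bound:
  assumes "is_walk E n v" "n \<le> N"
  shows "- (real N * weight_bound) \<le> walk_len c n v"
proof -
  have "- weight_bound \<le> c (v t)" if "t < n" for t
    using member_le_sum[OF walk_in_vertices[OF assms(1) that], of "\<lambda>u. \<bar>c u\<bar>"] finite_vertices
    unfolding weight_bound_def by fastforce
  then have "- (real n * weight_bound) \<le> walk_len c n v"
    unfolding walk_len_def using sum_mono[of "{..<n}" "\<lambda>_. - weight_bound"] by fastforce
  moreover have "real n * weight_bound \<le> real N * weight_bound"
    using assms(2) by (intro mult_right_mono) (auto simp: weight_bound_def sum_nonneg)
  ultimately show ?thesis by linarith
qed

definition walk_lens :: "'a \<Rightarrow> 'a \<Rightarrow> real set" where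
  "walk_lens x y = {walk_len c n v |n v. 0 < n \<and> n \<le> N \<and> is_walk E n v \<and> v 0 = x \<and> v n = y}"

text \<open>Walks into \<open>y\<close> from anywhere, as if from a virtual source joined to every vertex by an arc
  of length \<open>\<delta> + N \<cdot> weight_bound\<close>. They keep \<open>dist x y\<close> finite when \<open>y\<close> is not reachable
  from \<open>x\<close> and, by the choice of that arc length, never undercut \<open>\<delta>\<close> on the diagonal.\<close>
definition source_walk_lens :: "'a \<Rightarrow> real set" where
  "source_walk_lens y = {\<delta> + real N * weight_bound + walk_len c n v |n v. n \<le> N \<and> is_walk E n v \<and> v n = y}"

definition dist :: "'a \<Rightarrow> 'a \<Rightarrow> real" where
  "dist x y = Min (walk_lens x y \<union> source_walk_lens y)"

lemma finite_dist_candidates: "finite (walk_lens x y \<union> source_walk_lens y)"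
proof -
  have "walk_lens x y \<subseteq> {walk_len c n v |n v. n \<le> N \<and> is_walk E n v}"
    "source_walk_lens y \<subseteq> (+) (\<delta> + real N * weight_bound) ` {walk_len c n v |n v. n \<le> N \<and> is_walk E n v}"
    unfolding walk_lens_def source_walk_lens_def by blast+
  then show ?thesis using finite_walk_lens by (meson finite_UnI finite_imageI finite_subset)
qed

lemma dist_le: "r \<in> walk_lens x y \<union> source_walk_lens y \<Longrightarrow> dist x y \<le> r"
  unfolding dist_def using finite_dist_candidates by (rule Min_le)

lemma dist_mem: "dist x y \<in> walk_lens x y \<union> source_walk_lens y"
proof -
  have "is_walk E 0 (\<lambda>_. y)" unfolding is_walk_def by simp
  then have "source_walk_lens y \<noteq> {}" unfolding source_walk_lens_def by blast
  then show ?thesis unfolding dist_def using finite_dist_candidates by (intro Min_in) auto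
qed

lemma dist_arc: "(x, y) \<in> E \<Longrightarrow> dist x y \<le> c x"
proof -
  assume arc: "(x, y) \<in> E"
  define v where "v t = (if t = 0 then x else y)" for t :: nat
  have "is_walk E 1 v" "walk_len c 1 v = c x" unfolding is_walk_def walk_len_def v_def using arc by auto
  moreover have "1 \<le> N" using arcs_in[OF arc] finite_vertices by (metis One_nat_def Suc_leI card_gt_0_iff empty_iff)
  ultimately have "c x \<in> walk_lens x y" unfolding walk_lens_def v_def by force
  then show ?thesis by (intro dist_le) simp
qed

lemma dist_triangle: "(y, z) \<in> E \<Longrightarrow> dist x z \<le> dist x y + c y"
proof -
  assume arc: "(y, z) \<in> E"
  have extend: "\<exists>n' v'. is_walk E n' v' \<and> 0 < n' \<and> n' \<le> N \<and> v' 0 = v 0 \<and> v' n' = z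
      \<and> walk_len c n' v' \<le> walk_len c n v + c y" if "is_walk E n v" "v n = y" for n v
    using walk_shorten[OF is_walk_snoc(1)[OF that(1)]] is_walk_snoc(2)[OF that(1)] arc that(2)
    by (metis fun_upd_same fun_upd_other nat.distinct(1) zero_less_Suc)
  from dist_mem[of x y] show ?thesis
  proof
    assume "dist x y \<in> walk_lens x y"
    then obtain n v where "dist x y = walk_len c n v" "is_walk E n v" "v 0 = x" "v n = y"
      unfolding walk_lens_def by blast
    with extend obtain n' v' where "is_walk E n' v'" "0 < n'" "n' \<le> N" "v' 0 = x" "v' n' = z"
      "walk_len c n' v' \<le> dist x y + c y" by metis
    then show ?thesis using dist_le[of "walk_len c n' v'" x z] unfolding walk_lens_def by fastforce
  next
    assume "dist x y \<in> source_walk_lens y"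
    then obtain n v where "dist x y = \<delta> + real N * weight_bound + walk_len c n v" "is_walk E n v" "v n = y"
      unfolding source_walk_lens_def by blast
    with extend obtain n' v' where "is_walk E n' v'" "n' \<le> N" "v' n' = z"
      "\<delta> + real N * weight_bound + walk_len c n' v' \<le> dist x y + c y" by fastforce
    then show ?thesis
      using dist_le[of "\<delta> + real N * weight_bound + walk_len c n' v'" x z] unfolding source_walk_lens_def
      by fastforce
  qed
qed

lemma dist_diag: "\<delta> \<le> dist x x"
  using dist_mem[of x x] closed_walk_long walk_len_lower_bound
  unfolding walk_lens_def source_walk_lens_def by fastforce

end

section \<open>Closed walks in the exchange graph\<close>

lemma is_walk_rotate:
  assumes walk: "is_walk E n v" and n: "0 < n" and closed: "v n = v 0"
  shows "is_walk E n (\<lambda>t. v (Suc t mod n))" "walk_len c n (\<lambda>t. v (Suc t mod n)) = walk_len c n v"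
proof -
  have arc: "(v t, v (Suc t)) \<in> E" if "t < n" for t using walk that unfolding is_walk_def by blast
  show "is_walk E n (\<lambda>t. v (Suc t mod n))"
    unfolding is_walk_def
  proof (intro allI impI)
    fix t assume t: "t < n"
    show "(v (Suc t mod n), v (Suc (Suc t) mod n)) \<in> E"
    proof (cases "Suc t < n")
      case True
      then show ?thesis using arc[OF True] closed by (cases "Suc (Suc t) = n") (auto simp: mod_Suc)
    next
      case False
      then have "Suc t = n" using t by simp
      then have "Suc t mod n = 0" "Suc (Suc t) mod n = Suc 0 mod n"
        by (simp, metis mod_Suc_eq mod_self)
      moreover have "v (Suc 0 mod n) = v (Suc 0)" using closed by (cases "n = 1") auto
      ultimately show ?thesis using arc[OF n] by simp
    qed
  qed
  show "walk_len c n (\<lambda>t. v (Suc t mod n)) = walk_len c n v"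
    unfolding walk_len_def by (rule sum_lessThan_rotate[OF n])
qed

lemma sum_lessThan_pairs:
  fixes f :: "nat \<Rightarrow> 'b::comm_monoid_add"
  shows "(\<Sum>t<2 * k. f t) = (\<Sum>i<k. f (2 * i) + f (Suc (2 * i)))"
  by (induction k) (simp_all add: add.assoc)

text \<open>Arcs of the exchange graph alternate between \<open>B\<close> and its complement, so a closed walk
  starting in \<open>B\<close> is an alternating cycle.\<close>
lemma closed_walk_alt_cycle:
  assumes walk: "is_walk (exch_arcs X I1 I2 B) n v" and n: "0 < n" and closed: "v n = v 0"
    and start: "v 0 \<in> B"
  shows "\<exists>k xs ys. alt_cycle (\<lambda>x y. (x, y) \<in> exch_A1 X I1 B) (\<lambda>y x. (y, x) \<in> exch_A2 X I2 B) k xs ys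
    \<and> alt_cycle_len (exch_len B w) k xs ys = walk_len (exch_len B w) n v"
proof -
  have arc: "(v t, v (Suc t)) \<in> exch_arcs X I1 I2 B" if "t < n" for t
    using walk that unfolding is_walk_def by blast
  have parity: "v t \<in> B \<longleftrightarrow> even t" if "t \<le> n" for t
    using that by (induction t) (use start exch_arcs_alternate(2)[OF arc] in auto)
  obtain k where k: "n = 2 * k" using parity[of n] closed start by (auto elim: evenE)
  define xs where "xs i = v (2 * i)" for i
  define ys where "ys i = v (Suc (2 * i))" for i
  have "alt_cycle (\<lambda>x y. (x, y) \<in> exch_A1 X I1 B) (\<lambda>y x. (y, x) \<in> exch_A2 X I2 B) k xs ys"
    unfolding alt_cycle_def
  proof (intro conjI allI impI)
    show "0 < k" using n k by simp
    fix i assume i: "i < k"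
    show "(xs i, ys i) \<in> exch_A1 X I1 B"
      using exch_arcs_alternate(1)[OF arc[of "2 * i"]] parity[of "2 * i"] i k
      unfolding xs_def ys_def by simp
    have "xs (Suc i mod k) = v (Suc (Suc (2 * i)))"
      using closed i k unfolding xs_def by (cases "Suc i = k") auto
    moreover have "(v (Suc (2 * i)), v (Suc (Suc (2 * i)))) \<in> exch_A2 X I2 B"
      using exch_arcs_alternate(1)[OF arc[of "Suc (2 * i)"]] arc[of "Suc (2 * i)"]
        parity[of "Suc (2 * i)"] i k by auto
    ultimately show "(ys i, xs (Suc i mod k)) \<in> exch_A2 X I2 B" unfolding ys_def by simp
  qed
  moreover have "alt_cycle_len (exch_len B w) k xs ys = walk_len (exch_len B w) n v"
    unfolding alt_cycle_len_def walk_len_def k sum_lessThan_pairs xs_def ys_def ..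
  ultimately show ?thesis by blast
qed

lemma closed_walk_len_ge_if_delta_optimal:
  assumes "matroid X I1" "matroid X I2" "common_basis I1 I2 B" "0 \<le> \<delta>"
    and opt: "delta_optimal I1 I2 w \<delta> B"
    and walk: "is_walk (exch_arcs X I1 I2 B) n v" and n: "0 < n" and closed: "v n = v 0"
  shows "\<delta> \<le> walk_len (exch_len B w) n v"
proof -
  have long: "\<delta> \<le> walk_len (exch_len B w) n u"
    if "is_walk (exch_arcs X I1 I2 B) n u" "u n = u 0" "u 0 \<in> B" for u
    using closed_walk_alt_cycle[OF that(1) n that(2,3)] alt_cycle_len_ge_if_delta_optimal[OF assms(1-5)]
    by metis
  have "v 0 \<in> B \<or> v (Suc 0 mod n) \<in> B"
  proof -
    have "(v 0, v (Suc 0)) \<in> exch_arcs X I1 I2 B" using walk n unfolding is_walk_def by blast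
    moreover have "v (Suc 0 mod n) = v (Suc 0)" using closed by (cases "n = 1") auto
    ultimately show ?thesis using exch_arcs_alternate(2) by metis
  qed
  then show ?thesis
  proof
    assume "v (Suc 0 mod n) \<in> B"
    moreover have "Suc n mod n = Suc 0 mod n" by (metis mod_Suc_eq mod_self)
    ultimately show ?thesis
      using long[OF is_walk_rotate(1)[OF walk n closed]] is_walk_rotate(2)[OF walk n closed] by simp
  qed (use long walk closed in blast)
qed

theorem mainTheorem4:
  fixes X :: "'a set" and I1 I2 :: "'a set set" and B :: "'a set"
    and \<delta> :: real and w' :: "'a \<Rightarrow> real"
  assumes "finite X"
    and "matroid X I1" and "matroid X I2"
    and "common_basis I1 I2 B"
    and "\<delta> \<ge> 0"
    and "\<forall>x\<in>X. w' x \<ge> 0"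
  shows "delta_optimal I1 I2 w' \<delta> B \<longleftrightarrow>
    (\<exists>d :: 'a \<Rightarrow> 'a \<Rightarrow> real.
       (\<forall>(x, y) \<in> exch_A1 X I1 B \<union> exch_A2 X I2 B. d x y \<le> arc_len X I1 I2 B w' x y) \<and>
       (\<forall>x\<in>X. \<forall>(y, z) \<in> exch_A1 X I1 B \<union> exch_A2 X I2 B.
           d x z \<le> d x y + arc_len X I1 I2 B w' y z) \<and>
       (\<forall>x\<in>X. d x x \<ge> \<delta>))" (is "_ \<longleftrightarrow> (\<exists>d. ?distances d)")
proof
  assume opt: "delta_optimal I1 I2 w' \<delta> B"
  have "B \<subseteq> X"
    using assms(4) finite_matroid.indep_subset_ground[OF finite_matroid.intro[OF assms(2)]]
    unfolding common_basis_def basis_def by blast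
  then interpret long_closed_walks "exch_arcs X I1 I2 B" X "exch_len B w'" \<delta>
    using assms(1,5) closed_walk_len_ge_if_delta_optimal[OF assms(2-4) assms(5) opt]
    by unfold_locales (auto simp: exch_A1_def exch_A2_def)
  show "\<exists>d. ?distances d"
    by (intro exI[of _ dist] conjI ballI)
      (auto simp: arc_len_eq_exch_len dist_arc dist_triangle dist_diag)
next
  assume "\<exists>d. ?distances d"
  then show "delta_optimal I1 I2 w' \<delta> B" using delta_optimal_if_distances[OF assms(2-4)] by blast
qed

end
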